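(* Let $f:(\mathbb R^2,q)\to(\mathbb R^3,p)$ be a smooth germ with a corank 1 singularity at $q$ whose curvature parabola $\Delta_p$ is a non-degenerate parabola or a half-line, and let $(u,v)$ be a coordinate system with $f_u(q)\neq0$, $f_v(q)=0$, $|f_u(q)|=|f_{vv}(q)|=1$ and $\langle f_u(q),f_{vv}(q)\rangle=0$. Then $$\kappa_a(p)=\big(\langle f_{uu},f_{vv}\rangle-\langle f_{uv},f_{vv}\rangle^2\big)(q).$$
   Context: $T_pM=\operatorname{im}df_q$, $N_pM$ its orthogonal complement with a fixed orientation. First fundamental form $I(X,Y)=\langle df_qX,df_qY\rangle$; second fundamental form $II$: the symmetric bilinear map $T_q\mathbb R^2\times T_q\mathbb R^2\to N_pM$ with $II(\partial_u,\partial_u)=f_{uu}(q)^\perp$, $II(\partial_u,\partial_v)=f_{uv}(q)^\perp$, $II(\partial_v,\partial_v)=f_{vv}(q)^\perp$ ($\perp$ = orthogonal projection to $N_pM$). Curvature parabola $\Delta_p=\{II(X,X): I(X,X)=1\}\subset N_pM$. Axial vector $v_a$: if $\Delta_p$ is a non-degenerate parabola, the unit vector along its axis of symmetry pointing to its interior; if $\Delta_p$ is a half-line, the unit vector in the direction in which the half-line extends. Axial curvature $\kappa_a(p)=\min\{\langle II(X,X),v_a\rangle: I(X,X)=1\}$. *)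

theory Defs
  imports "HOL-Analysis.Analysis"
begin

type_synonym surf = "real \<times> real \<Rightarrow> real^3"

definition pu :: "surf \<Rightarrow> surf" where
  "pu g = (\<lambda>(u,v). vector_derivative (\<lambda>s. g (s,v)) (at u))"

definition pv :: "surf \<Rightarrow> surf" where
  "pv g = (\<lambda>(u,v). vector_derivative (\<lambda>t. g (u,t)) (at v))"

inductive_set partials :: "surf \<Rightarrow> surf set" for f :: surf where
  self: "f \<in> partials f"
| du: "g \<in> partials f \<Longrightarrow> pu g \<in> partials f"
| dv: "g \<in> partials f \<Longrightarrow> pv g \<in> partials f"

definition smooth_on :: "(real \<times> real) set \<Rightarrow> surf \<Rightarrow> bool" where
  "smooth_on U f \<longleftrightarrow> (\<forall>g\<in>partials f. continuous_on U g \<and>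
     (\<forall>u v. (u,v) \<in> U \<longrightarrow> (\<lambda>s. g (s,v)) differentiable (at u) \<and> (\<lambda>t. g (u,t)) differentiable (at v)))"

text \<open>Differential df_q applied to X = (a,b) = a d/du + b d/dv.\<close>
definition dfq :: "surf \<Rightarrow> real \<times> real \<Rightarrow> real \<times> real \<Rightarrow> real^3" where
  "dfq f q X = fst X *\<^sub>R pu f q + snd X *\<^sub>R pv f q"

definition tangent_space :: "surf \<Rightarrow> real \<times> real \<Rightarrow> (real^3) set" where
  "tangent_space f q = range (dfq f q)"

definition normal_space :: "surf \<Rightarrow> real \<times> real \<Rightarrow> (real^3) set" where
  "normal_space f q = {y. \<forall>t\<in>tangent_space f q. y \<bullet> t = 0}"

definition nproj :: "surf \<Rightarrow> real \<times> real \<Rightarrow> real^3 \<Rightarrow> real^3" where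
  "nproj f q x = (THE y. y \<in> normal_space f q \<and> x - y \<in> tangent_space f q)"

definition first_ff :: "surf \<Rightarrow> real \<times> real \<Rightarrow> real \<times> real \<Rightarrow> real \<times> real \<Rightarrow> real" where
  "first_ff f q X Y = dfq f q X \<bullet> dfq f q Y"

definition second_ff :: "surf \<Rightarrow> real \<times> real \<Rightarrow> real \<times> real \<Rightarrow> real \<times> real \<Rightarrow> real^3" where
  "second_ff f q X Y =
     (fst X * fst Y) *\<^sub>R nproj f q (pu (pu f) q)
   + (fst X * snd Y + snd X * fst Y) *\<^sub>R nproj f q (pv (pu f) q)
   + (snd X * snd Y) *\<^sub>R nproj f q (pv (pv f) q)"

definition curvature_parabola :: "surf \<Rightarrow> real \<times> real \<Rightarrow> (real^3) set" where
  "curvature_parabola f q = {second_ff f q X X | X. first_ff f q X X = 1}"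

definition axial_vector :: "(real^3) set \<Rightarrow> real^3 \<Rightarrow> bool" where
  "axial_vector P w \<longleftrightarrow> norm w = 1 \<and>
    ((\<exists>c e1 a. norm e1 = 1 \<and> e1 \<bullet> w = 0 \<and> a > 0 \<and>
        P = {c + t *\<^sub>R e1 + (a * t\<^sup>2) *\<^sub>R w | t. True})
     \<or> (\<exists>c. P = {c + s *\<^sub>R w | s. s \<ge> 0}))"

definition nondeg_parabola_or_halfline :: "(real^3) set \<Rightarrow> bool" where
  "nondeg_parabola_or_halfline P \<longleftrightarrow> (\<exists>w. axial_vector P w)"

definition axial_curvature :: "surf \<Rightarrow> real \<times> real \<Rightarrow> real" where
  "axial_curvature f q =
    (let w = (THE w. axial_vector (curvature_parabola f q) w) in
     Inf {second_ff f q X X \<bullet> w | X. first_ff f q X X = 1})"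

end

theory Submission
  imports Defs
begin

(* Since f_v(q) = 0 and |f_u(q)| = 1, the first fundamental form is I(X,X) = a^2 for X = (a,b),
   and the normal projection only removes the f_u-component, so f_vv(q), being orthogonal to
   f_u(q), is its own normal part.  On I(X,X) = 1 the second fundamental form is therefore
   II(X,X) = A + 2t B + t^2 C with t = ab, A and B the normal parts of f_uu and f_uv, and
   C = f_vv.  Completing the square in t shows that this curve is a parabola with axis
   direction C, or a half-line in direction C when B is parallel to C; hence v_a = C, and
   <II(X,X), C> = <A,C> - <B,C>^2 + (t + <B,C>)^2 has minimum <f_uu,C> - <f_uv,C>^2.
   The axial vector is well defined because a parabola is contained neither in a parabola
   with a different axis nor in a line. *)

lemma scaled_square_eq_quadratic_imp_lead_zero:
  fixes a x0 x1 x2 y0 y1 y2 :: real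
  assumes "\<And>t. a * (x0 + x1*t + x2*t\<^sup>2)\<^sup>2 = y0 + y1*t + y2*t\<^sup>2" and "a \<noteq> 0"
  shows "x2 = 0"
proof -
  \<comment> \<open>F is a quartic with leading coefficient a x2^2, and the fourth finite difference
    of a quartic is 24 times its leading coefficient.\<close>
  define F where "F t = a * (x0 + x1*t + x2*t\<^sup>2)\<^sup>2 - (y0 + y1*t + y2*t\<^sup>2)" for t
  have "F t = 0" for t
    using assms(1) unfolding F_def by simp
  moreover have "24 * a * x2\<^sup>2 = F 2 - 4 * F 1 + 6 * F 0 - 4 * F (-1) + F (-2)"
    unfolding F_def by (simp add: algebra_simps power2_eq_square power4_eq_xxxx)
  ultimately show ?thesis
    using assms(2) by simp
qed

lemma vector_quadratic_eq_0_imp_lead_zero: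
  fixes V0 V1 V2 :: "'a::real_vector"
  assumes "\<And>t::real. V0 + t *\<^sub>R V1 + t\<^sup>2 *\<^sub>R V2 = 0"
  shows "V2 = 0"
proof -
  have "(2::real) *\<^sub>R V2 = (V0 + V1 + V2) + (V0 - V1 + V2) - 2 *\<^sub>R V0"
    by (simp add: algebra_simps scaleR_2)
  then show ?thesis
    using assms[of 0] assms[of 1] assms[of "-1"] by simp
qed

lemma parabola_subset_parabola_imp_same_axis:
  fixes c e w d f v :: "'a::real_inner"
  assumes "norm w = 1" "a > 0"
    and "norm f = 1" "norm v = 1" "f \<bullet> v = 0" "b > 0"
    and sub: "range (\<lambda>t. c + t *\<^sub>R e + (a * t\<^sup>2) *\<^sub>R w) \<subseteq> range (\<lambda>s. d + s *\<^sub>R f + (b * s\<^sup>2) *\<^sub>R v)"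
  shows "w = v"
proof -
  \<comment> \<open>Reading off the f- and v-coordinates, the parameter s of the point on the second
    parabola is quadratic in t, and so is b s^2; hence s is affine in t, and comparing
    t^2-coefficients gives a w = b x1^2 v.\<close>
  have ff: "f \<bullet> f = 1" and vv: "v \<bullet> v = 1" and vf: "v \<bullet> f = 0"
    using assms by (simp_all add: dot_square_norm inner_commute)
  define x0 x1 x2 where "x0 = (c - d) \<bullet> f" and "x1 = e \<bullet> f" and "x2 = a * (w \<bullet> f)"
  define y0 y1 y2 where "y0 = (c - d) \<bullet> v" and "y1 = e \<bullet> v" and "y2 = a * (w \<bullet> v)"
  have param: "b * (x0 + x1*t + x2*t\<^sup>2)\<^sup>2 = y0 + y1*t + y2*t\<^sup>2 \<and>
      c + t *\<^sub>R e + (a * t\<^sup>2) *\<^sub>R w = d + (x0 + x1*t + x2*t\<^sup>2) *\<^sub>R f + (b * (x0 + x1*t + x2*t\<^sup>2)\<^sup>2) *\<^sub>R v"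
    for t
  proof -
    obtain s where s: "c - d + t *\<^sub>R e + (a * t\<^sup>2) *\<^sub>R w = s *\<^sub>R f + (b * s\<^sup>2) *\<^sub>R v"
      using sub by (force simp: algebra_simps)
    have "s = x0 + x1*t + x2*t\<^sup>2"
      using arg_cong[OF s, of "\<lambda>x. x \<bullet> f"] unfolding x0_def x1_def x2_def
      by (simp add: ff vf algebra_simps)
    moreover have "b * s\<^sup>2 = y0 + y1*t + y2*t\<^sup>2"
      using arg_cong[OF s, of "\<lambda>x. x \<bullet> v"] unfolding y0_def y1_def y2_def
      by (simp add: vv assms(5) algebra_simps)
    ultimately show ?thesis
      using s by (simp add: algebra_simps)
  qed
  have "x2 = 0"
    using param \<open>b > 0\<close> by (intro scaled_square_eq_quadratic_imp_lead_zero[of b]) auto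
  then have "(c - d - x0 *\<^sub>R f - (b * x0\<^sup>2) *\<^sub>R v) + t *\<^sub>R (e - x1 *\<^sub>R f - (2 * b * x0 * x1) *\<^sub>R v)
      + t\<^sup>2 *\<^sub>R (a *\<^sub>R w - (b * x1\<^sup>2) *\<^sub>R v) = 0" for t
    using param[of t] by (simp add: algebra_simps power2_eq_square)
  then have eq: "a *\<^sub>R w = (b * x1\<^sup>2) *\<^sub>R v"
    using vector_quadratic_eq_0_imp_lead_zero by fastforce
  then have "norm (a *\<^sub>R w) = norm ((b * x1\<^sup>2) *\<^sub>R v)"
    by simp
  then have "a = b * x1\<^sup>2"
    using assms by simp
  then show ?thesis
    using eq \<open>a > 0\<close> by auto
qed

lemma parabola_not_subset_line:
  fixes c e w d v :: "'a::real_inner"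
  assumes "norm e = 1" "norm w = 1" "e \<bullet> w = 0" "a \<noteq> 0"
  shows "\<not> range (\<lambda>t. c + t *\<^sub>R e + (a * t\<^sup>2) *\<^sub>R w) \<subseteq> range (\<lambda>s. d + s *\<^sub>R v)"
proof
  assume sub: "range (\<lambda>t. c + t *\<^sub>R e + (a * t\<^sup>2) *\<^sub>R w) \<subseteq> range (\<lambda>s. d + s *\<^sub>R v)"
  have ee: "e \<bullet> e = 1" and ww: "w \<bullet> w = 1" and we: "w \<bullet> e = 0"
    using assms by (simp_all add: dot_square_norm inner_commute)
  have "\<exists>s. c + t *\<^sub>R e + (a * t\<^sup>2) *\<^sub>R w = d + s *\<^sub>R v" for t
    using sub by blast
  from this[of 0] this[of 1] this[of "-1"] have
    "\<exists>s. c = d + s *\<^sub>R v" "\<exists>s. c + e + a *\<^sub>R w = d + s *\<^sub>R v"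
    "\<exists>s. c - e + a *\<^sub>R w = d + s *\<^sub>R v"
    by simp_all
  then obtain s0 s1 s2 where
    "c = d + s0 *\<^sub>R v" "c + e + a *\<^sub>R w = d + s1 *\<^sub>R v" "c - e + a *\<^sub>R w = d + s2 *\<^sub>R v"
    by blast
  then have g1: "e + a *\<^sub>R w = (s1 - s0) *\<^sub>R v" and g2: "a *\<^sub>R w - e = (s2 - s0) *\<^sub>R v"
    by (simp_all add: algebra_simps)
  have "(s1 - s0) * (v \<bullet> e) = 1"
    using arg_cong[OF g1, of "\<lambda>x. x \<bullet> e"] by (simp add: inner_add_left ee we)
  moreover have "(s2 - s0) * (v \<bullet> e) = -1"
    using arg_cong[OF g2, of "\<lambda>x. x \<bullet> e"] by (simp add: inner_diff_left ee we)
  moreover have "(s1 - s0) * (v \<bullet> w) = a"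
    using arg_cong[OF g1, of "\<lambda>x. x \<bullet> w"] by (simp add: inner_add_left ww assms(3))
  moreover have "(s2 - s0) * (v \<bullet> w) = a"
    using arg_cong[OF g2, of "\<lambda>x. x \<bullet> w"] by (simp add: inner_diff_left ww assms(3))
  ultimately have "a = 0"
    by algebra
  then show False
    using \<open>a \<noteq> 0\<close> by simp
qed

lemma halfline_eq_imp_direction_eq:
  fixes c w d v :: "'a::real_normed_vector"
  assumes "norm w = 1" "norm v = 1"
    and eq: "(\<lambda>s. c + s *\<^sub>R w) ` {0..} = (\<lambda>s. d + s *\<^sub>R v) ` {0..}"
  shows "w = v"
proof -
  have on_ray: "c + s *\<^sub>R w \<in> (\<lambda>s. d + s *\<^sub>R v) ` {0..}" if "s \<ge> 0" for s
    unfolding eq[symmetric] using that by auto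
  obtain s0 where s0: "s0 \<ge> 0" "c = d + s0 *\<^sub>R v"
    using on_ray[of 0] by auto
  obtain s1 where s1: "c + w = d + s1 *\<^sub>R v"
    using on_ray[of 1] by auto
  have wv: "w = (s1 - s0) *\<^sub>R v"
    using s0(2) s1 by (simp add: algebra_simps)
  then have "\<bar>s1 - s0\<bar> = 1"
    using assms by simp
  moreover have "s1 - s0 \<noteq> -1"
  proof
    assume "s1 - s0 = -1"
    then have "w = - v"
      using wv by simp
    have "d + (s0 + 1) *\<^sub>R v \<in> (\<lambda>s. c + s *\<^sub>R w) ` {0..}"
      unfolding eq using s0(1) by auto
    then obtain r where "r \<ge> 0" "d + (s0 + 1) *\<^sub>R v = c + r *\<^sub>R w"
      by auto
    then have "(1 + r) *\<^sub>R v = 0"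
      using s0(2) \<open>w = - v\<close> by (simp add: algebra_simps)
    then show False
      using \<open>r \<ge> 0\<close> \<open>norm v = 1\<close> by auto
  qed
  ultimately show ?thesis
    using wv by (simp add: abs_if split: if_splits)
qed

lemma axial_vector_iff:
  "axial_vector P w \<longleftrightarrow> norm w = 1 \<and>
    ((\<exists>c e a. norm e = 1 \<and> e \<bullet> w = 0 \<and> a > 0 \<and> P = range (\<lambda>t. c + t *\<^sub>R e + (a * t\<^sup>2) *\<^sub>R w))
     \<or> (\<exists>c. P = (\<lambda>s. c + s *\<^sub>R w) ` {0..}))"
proof -
  have "{c + t *\<^sub>R e + (a * t\<^sup>2) *\<^sub>R w | t. True} = range (\<lambda>t. c + t *\<^sub>R e + (a * t\<^sup>2) *\<^sub>R w)"
    for c e :: "real^3" and a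
    by auto
  moreover have "{c + s *\<^sub>R w | s. s \<ge> 0} = (\<lambda>s. c + s *\<^sub>R w) ` {0..}" for c :: "real^3"
    by auto
  ultimately show ?thesis
    unfolding axial_vector_def by simp
qed

lemma axial_vector_parabola_eq_axis:
  fixes c e w :: "real^3"
  assumes "norm e = 1" "norm w = 1" "e \<bullet> w = 0" "a > 0"
    and P: "P = range (\<lambda>t. c + t *\<^sub>R e + (a * t\<^sup>2) *\<^sub>R w)" and "axial_vector P w'"
  shows "w = w'"
proof -
  have "norm w' = 1"
    using \<open>axial_vector P w'\<close> by (simp add: axial_vector_iff)
  from \<open>axial_vector P w'\<close> consider
      (parabola) c' e' a' where "norm e' = 1" "e' \<bullet> w' = 0" "a' > 0"
        "P = range (\<lambda>t. c' + t *\<^sub>R e' + (a' * t\<^sup>2) *\<^sub>R w')"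
    | (halfline) c' where "P = (\<lambda>s. c' + s *\<^sub>R w') ` {0..}"
    unfolding axial_vector_iff by blast
  then show ?thesis
  proof cases
    case parabola
    then show ?thesis
      using parabola_subset_parabola_imp_same_axis[OF \<open>norm w = 1\<close> \<open>a > 0\<close> _ \<open>norm w' = 1\<close>] P
      by blast
  next
    case halfline
    then have "P \<subseteq> range (\<lambda>s. c' + s *\<^sub>R w')"
      by auto
    then show ?thesis
      using parabola_not_subset_line[OF assms(1-3)] \<open>a > 0\<close> P by auto
  qed
qed

lemma axial_vector_unique:
  assumes "axial_vector P w" and "axial_vector P w'"
  shows "w = w'"
proof -
  have "norm w = 1" "norm w' = 1"
    using assms by (simp_all add: axial_vector_iff)
  from assms(1) consider
      (parabola) c e a where "norm e = 1" "e \<bullet> w = 0" "a > 0"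
        "P = range (\<lambda>t. c + t *\<^sub>R e + (a * t\<^sup>2) *\<^sub>R w)"
    | (halfline) c where "P = (\<lambda>s. c + s *\<^sub>R w) ` {0..}"
    unfolding axial_vector_iff by blast
  then show ?thesis
  proof cases
    case parabola
    show ?thesis
      using axial_vector_parabola_eq_axis[OF parabola(1) \<open>norm w = 1\<close> parabola(2-4) assms(2)] .
  next
    case halfline
    from assms(2) consider
        (parabola') c' e' a' where "norm e' = 1" "e' \<bullet> w' = 0" "a' > 0"
          "P = range (\<lambda>t. c' + t *\<^sub>R e' + (a' * t\<^sup>2) *\<^sub>R w')"
      | (halfline') c' where "P = (\<lambda>s. c' + s *\<^sub>R w') ` {0..}"
      unfolding axial_vector_iff by blast
    then show ?thesis
    proof cases
      case parabola'
      show ?thesis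
        using axial_vector_parabola_eq_axis[OF parabola'(1) \<open>norm w' = 1\<close> parabola'(2-4) assms(1)]
        by (rule sym)
    next
      case halfline'
      then have "(\<lambda>s. c + s *\<^sub>R w) ` {0..} = (\<lambda>s. c' + s *\<^sub>R w') ` {0..}"
        using halfline by simp
      then show ?thesis
        by (rule halfline_eq_imp_direction_eq[OF \<open>norm w = 1\<close> \<open>norm w' = 1\<close>])
    qed
  qed
qed

definition quadratic_curve :: "'a::real_vector \<Rightarrow> 'a \<Rightarrow> 'a \<Rightarrow> 'a set" where
  "quadratic_curve A B C = range (\<lambda>t. A + (2 * t) *\<^sub>R B + t\<^sup>2 *\<^sub>R C)"

lemma axial_vector_quadratic_curve:
  fixes A B C :: "real^3"
  assumes "norm C = 1"
  shows "axial_vector (quadratic_curve A B C) C"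
proof -
  define \<beta> where "\<beta> = B \<bullet> C"
  define B' where "B' = B - \<beta> *\<^sub>R C"
  define c where "c = A - \<beta>\<^sup>2 *\<^sub>R C - (2 * \<beta>) *\<^sub>R B'"
  have "B' \<bullet> C = 0"
    using assms unfolding B'_def \<beta>_def by (simp add: inner_diff_left dot_square_norm)
  have complete_square: "A + (2 * t) *\<^sub>R B + t\<^sup>2 *\<^sub>R C = c + (2 * (t + \<beta>)) *\<^sub>R B' + (t + \<beta>)\<^sup>2 *\<^sub>R C" for t
    unfolding c_def B'_def by (simp add: algebra_simps power2_eq_square)
  show ?thesis
  proof (cases "B' = 0")
    case True
    have "quadratic_curve A B C = (\<lambda>s. c + s *\<^sub>R C) ` range (\<lambda>t. (t + \<beta>)\<^sup>2)"
      unfolding quadratic_curve_def complete_square True by (simp add: image_image)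
    also have "range (\<lambda>t. (t + \<beta>)\<^sup>2) = {0..}"
    proof (intro equalityI subsetI)
      fix s :: real
      assume "s \<in> {0..}"
      then have "s = (sqrt s - \<beta> + \<beta>)\<^sup>2"
        by simp
      then show "s \<in> range (\<lambda>t. (t + \<beta>)\<^sup>2)"
        by blast
    qed auto
    finally show ?thesis
      unfolding axial_vector_iff using assms by blast
  next
    case False
    define L where "L = norm B'"
    define e where "e = (1 / L) *\<^sub>R B'"
    define a where "a = 1 / (4 * L\<^sup>2)"
    have "L > 0"
      using False unfolding L_def by simp
    have "norm e = 1" "e \<bullet> C = 0" "a > 0"
      using \<open>L > 0\<close> \<open>B' \<bullet> C = 0\<close> unfolding e_def a_def L_def by simp_all
    have "A + (2 * t) *\<^sub>R B + t\<^sup>2 *\<^sub>R C = c + (2 * L * (t + \<beta>)) *\<^sub>R e + (a * (2 * L * (t + \<beta>))\<^sup>2) *\<^sub>R C" for t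
      unfolding complete_square e_def a_def using \<open>L > 0\<close> by (simp add: power_mult_distrib)
    then have "quadratic_curve A B C =
        (\<lambda>\<tau>. c + \<tau> *\<^sub>R e + (a * \<tau>\<^sup>2) *\<^sub>R C) ` range (\<lambda>t. 2 * L * (t + \<beta>))"
      unfolding quadratic_curve_def by (simp add: image_image)
    also have "range (\<lambda>t. 2 * L * (t + \<beta>)) = UNIV"
      by (rule surjI[of _ "\<lambda>\<tau>. \<tau> / (2 * L) - \<beta>"]) (use \<open>L > 0\<close> in simp)
    finally show ?thesis
      unfolding axial_vector_iff using assms \<open>norm e = 1\<close> \<open>e \<bullet> C = 0\<close> \<open>a > 0\<close> by blast
  qed
qed

lemma Inf_inner_quadratic_curve:
  fixes A B C :: "'a::real_inner"
  assumes "norm C = 1"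
  shows "Inf ((\<lambda>x. x \<bullet> C) ` quadratic_curve A B C) = A \<bullet> C - (B \<bullet> C)\<^sup>2"
proof -
  define \<beta> where "\<beta> = B \<bullet> C"
  have "(A + (2 * t) *\<^sub>R B + t\<^sup>2 *\<^sub>R C) \<bullet> C = A \<bullet> C - \<beta>\<^sup>2 + (t + \<beta>)\<^sup>2" for t
    using assms unfolding \<beta>_def by (simp add: dot_square_norm power2_eq_square algebra_simps)
  then have "Inf ((\<lambda>x. x \<bullet> C) ` quadratic_curve A B C) = Inf (range (\<lambda>t. A \<bullet> C - \<beta>\<^sup>2 + (t + \<beta>)\<^sup>2))"
    unfolding quadratic_curve_def image_image by simp
  also have "\<dots> = A \<bullet> C - \<beta>\<^sup>2"
    by (rule cInf_eq_minimum) (auto intro: image_eqI[where x = "- \<beta>"])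
  finally show ?thesis
    unfolding \<beta>_def .
qed

lemma tangent_space_corank_one:
  assumes "pv f q = 0"
  shows "tangent_space f q = range (\<lambda>k. k *\<^sub>R pu f q)"
proof -
  have "dfq f q = (\<lambda>k. k *\<^sub>R pu f q) \<circ> fst"
    using assms unfolding dfq_def by auto
  then show ?thesis
    unfolding tangent_space_def by (simp only: image_comp[symmetric] range_fst)
qed

lemma nproj_corank_one:
  assumes "pv f q = 0" and "norm (pu f q) = 1"
  shows "nproj f q x = x - (x \<bullet> pu f q) *\<^sub>R pu f q"
proof -
  define e where "e = pu f q"
  have "e \<bullet> e = 1"
    using assms(2) unfolding e_def by (simp add: dot_square_norm)
  have tangent: "y \<in> tangent_space f q \<longleftrightarrow> (\<exists>k. y = k *\<^sub>R e)" for y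
    unfolding tangent_space_corank_one[OF assms(1)] e_def by auto
  have normal: "y \<in> normal_space f q \<longleftrightarrow> y \<bullet> e = 0" for y
    unfolding normal_space_def tangent_space_corank_one[OF assms(1)] e_def[symmetric]
    by (auto dest: spec[of _ 1])
  show ?thesis
    unfolding nproj_def e_def[symmetric]
  proof (rule the_equality)
    fix y
    assume y: "y \<in> normal_space f q \<and> x - y \<in> tangent_space f q"
    then obtain k where "x - y = k *\<^sub>R e"
      unfolding tangent by blast
    then have "y = x - k *\<^sub>R e"
      by (simp add: algebra_simps)
    moreover have "y \<bullet> e = 0"
      using y normal by blast
    ultimately show "y = x - (x \<bullet> e) *\<^sub>R e"
      using \<open>e \<bullet> e = 1\<close> by (simp add: inner_diff_left)
  qed (use \<open>e \<bullet> e = 1\<close> in \<open>auto simp: normal tangent inner_diff_left\<close>)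
qed

lemma curvature_parabola_corank_one:
  assumes "pv f q = 0" and "norm (pu f q) = 1" and "pu f q \<bullet> pv (pv f) q = 0"
  shows "curvature_parabola f q =
    quadratic_curve (nproj f q (pu (pu f) q)) (nproj f q (pv (pu f) q)) (pv (pv f) q)"
proof -
  have nproj: "nproj f q x = x - (x \<bullet> pu f q) *\<^sub>R pu f q" for x
    using nproj_corank_one[OF assms(1,2)] .
  have first: "first_ff f q X X = (fst X)\<^sup>2" for X
    using assms(1,2) unfolding first_ff_def dfq_def by (simp add: dot_square_norm power2_eq_square)
  have second: "second_ff f q X X = (fst X)\<^sup>2 *\<^sub>R nproj f q (pu (pu f) q)
      + (2 * fst X * snd X) *\<^sub>R nproj f q (pv (pu f) q) + (snd X)\<^sup>2 *\<^sub>R pv (pv f) q" for X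
    using assms(3) unfolding second_ff_def nproj[of "pv (pv f) q"]
    by (simp add: inner_commute power2_eq_square algebra_simps)
  define g where "g t = nproj f q (pu (pu f) q) + (2 * t) *\<^sub>R nproj f q (pv (pu f) q)
      + t\<^sup>2 *\<^sub>R pv (pv f) q" for t
  have on_curve: "second_ff f q X X = g (fst X * snd X)" if "(fst X)\<^sup>2 = 1" for X
    using that unfolding second g_def by (simp add: power_mult_distrib)
  show ?thesis
    unfolding quadratic_curve_def g_def[symmetric]
  proof (intro equalityI subsetI)
    fix x
    assume "x \<in> curvature_parabola f q"
    then show "x \<in> range g"
      unfolding curvature_parabola_def first using on_curve by auto
  next
    fix x
    assume "x \<in> range g"
    then obtain t where "x = g t"
      by blast
    then have "x = second_ff f q (1, t) (1, t)"
      using on_curve[of "(1, t)"] by simp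
    then show "x \<in> curvature_parabola f q"
      unfolding curvature_parabola_def first by fastforce
  qed
qed

lemma axial_curvature_eq_Inf:
  assumes "axial_vector (curvature_parabola f q) w"
  shows "axial_curvature f q = Inf ((\<lambda>x. x \<bullet> w) ` curvature_parabola f q)"
proof -
  have "(THE w. axial_vector (curvature_parabola f q) w) = w"
    using assms axial_vector_unique by blast
  moreover have "{second_ff f q X X \<bullet> w | X. first_ff f q X X = 1} = (\<lambda>x. x \<bullet> w) ` curvature_parabola f q"
    unfolding curvature_parabola_def by auto
  ultimately show ?thesis
    unfolding axial_curvature_def by simp
qed

theorem mainTheorem3:
  fixes f :: "real \<times> real \<Rightarrow> real^3" and q :: "real \<times> real" and U :: "(real \<times> real) set"
  assumes "open U" and "q \<in> U" and "smooth_on U f"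
    and "dim (tangent_space f q) = 1"
    and "nondeg_parabola_or_halfline (curvature_parabola f q)"
    and "pu f q \<noteq> 0" and "pv f q = 0"
    and "norm (pu f q) = 1" and "norm (pv (pv f) q) = 1"
    and "pu f q \<bullet> pv (pv f) q = 0"
  shows "axial_curvature f q =
    pu (pu f) q \<bullet> pv (pv f) q - (pv (pu f) q \<bullet> pv (pv f) q)\<^sup>2"
proof -
  \<comment> \<open>The axial vector is determined directly.\<close>
  define C where "C = pv (pv f) q"
  have parabola: "curvature_parabola f q =
      quadratic_curve (nproj f q (pu (pu f) q)) (nproj f q (pv (pu f) q)) C"
    unfolding C_def using curvature_parabola_corank_one assms(7,8,10) .
  have normal_component: "nproj f q x \<bullet> C = x \<bullet> C" for x
    unfolding nproj_corank_one[OF assms(7,8)] C_def using assms(10)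
    by (simp add: inner_diff_left)
  have "axial_vector (curvature_parabola f q) C"
    unfolding parabola C_def by (rule axial_vector_quadratic_curve[OF assms(9)])
  then have "axial_curvature f q = Inf ((\<lambda>x. x \<bullet> C) ` curvature_parabola f q)"
    by (rule axial_curvature_eq_Inf)
  also have "\<dots> = nproj f q (pu (pu f) q) \<bullet> C - (nproj f q (pv (pu f) q) \<bullet> C)\<^sup>2"
    unfolding parabola by (rule Inf_inner_quadratic_curve) (use assms(9) C_def in simp)
  finally have "axial_curvature f q = pu (pu f) q \<bullet> C - (pv (pu f) q \<bullet> C)\<^sup>2"
    by (simp only: normal_component)
  then show ?thesis
    unfolding C_def .
qed

end
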